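(* Let $a<b$, $\ell_3>0$, $R>0$ and $\epsilon=1/R$. Let $U(y,z)$ be a smooth real-valued function on $[a,b]\times\mathbb{R}$, $\ell_3$-periodic in $z$, and let $g=\max\{\|U_y\|_{L^\infty},\|U_z\|_{L^\infty}\}$. Let $k>0$ and $c=c_r+ic_i\in\mathbb{C}$, and suppose there are smooth functions $u,v,w,p$ on $[a,b]\times\mathbb{R}$, $\ell_3$-periodic in $z$, with $(u,v,w)$ not identically zero, such that \[ ik(U-c)u+vU_y+wU_z=-ikp+\epsilon(\Delta-k^2)u,\quad ik(U-c)v=-p_y+\epsilon(\Delta-k^2)v, \] \[ ik(U-c)w=-p_z+\epsilon(\Delta-k^2)w,\quad iku+v_y+w_z=0, \] with $u=v=w=0$ at $y=a$ and $y=b$. If $Rg<\min(k,k^3)$, then $c_i<0$ (the eigenvalue is stable).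
   Context: Here $\Delta=\partial_y^2+\partial_z^2$. The system is the linearized Navier–Stokes operator (Reynolds number $R$, no-slip walls at $y=a,b$, periodic in $x$ and $z$) about the shear $(U(y,z),0,0)$, for perturbations of the form $e^{ik(x-ct)}(u,v,w,p)(y,z)+\text{c.c.}$; $(k,c)$ is then called an eigenmode. *)

theory Defs
  imports "HOL-Analysis.Analysis"
begin

definition strip :: "real \<Rightarrow> real \<Rightarrow> (real \<times> real) set" where
  "strip a b = {a..b} \<times> UNIV"

definition Dy :: "real \<Rightarrow> real \<Rightarrow> (real \<times> real \<Rightarrow> 'v::real_normed_vector) \<Rightarrow> real \<times> real \<Rightarrow> 'v" where
  "Dy a b f p = vector_derivative (\<lambda>t. f (t, snd p)) (at (fst p) within {a..b})"

definition Dz :: "(real \<times> real \<Rightarrow> 'v::real_normed_vector) \<Rightarrow> real \<times> real \<Rightarrow> 'v" where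
  "Dz f p = vector_derivative (\<lambda>t. f (fst p, t)) (at (snd p))"

text \<open>Smooth (C-infinity up to the boundary) on the closed strip: continuous,
  (Frechet) differentiable, and both partial derivatives again smooth.\<close>
coinductive smooth_strip :: "real \<Rightarrow> real \<Rightarrow> (real \<times> real \<Rightarrow> 'v::real_normed_vector) \<Rightarrow> bool"
  for a b where
  "\<lbrakk> continuous_on (strip a b) f;
     \<forall>p\<in>strip a b. f differentiable (at p within strip a b);
     smooth_strip a b (Dy a b f); smooth_strip a b (Dz f) \<rbrakk> \<Longrightarrow> smooth_strip a b f"

definition periodic_z :: "real \<Rightarrow> real \<Rightarrow> real \<Rightarrow> (real \<times> real \<Rightarrow> 'v) \<Rightarrow> bool" where
  "periodic_z a b l f \<longleftrightarrow> (\<forall>y\<in>{a..b}. \<forall>z. f (y, z + l) = f (y, z))"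

definition Lap :: "real \<Rightarrow> real \<Rightarrow> (real \<times> real \<Rightarrow> complex) \<Rightarrow> real \<times> real \<Rightarrow> complex" where
  "Lap a b f p = Dy a b (Dy a b f) p + Dz (Dz f) p"

end

theory Submission
  imports Defs
begin

text \<open>Energy method. Multiply the three momentum equations by the conjugates of u, v, w, add,
  take real parts and integrate over one period cell [a,b] x [0,l3]. Integration by parts (no-slip
  walls in y, periodicity in z) shows that the pressure work vanishes by incompressibility and that
  the viscous term is at most -(k^2/R) E, where E is the kinetic energy; the shear production term
  is bounded by g E. Hence k c_i E <= (g - k^2/R) E with E > 0, and R g < k^2 forces c_i < 0.\<close>

lemma smooth_strip_continuous_on: "smooth_strip a b f \<Longrightarrow> continuous_on (strip a b) f"
  by (erule smooth_strip.cases) auto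

lemma smooth_strip_differentiable:
  "smooth_strip a b f \<Longrightarrow> q \<in> strip a b \<Longrightarrow> f differentiable (at q within strip a b)"
  by (erule smooth_strip.cases) auto

lemma smooth_strip_Dy: "smooth_strip a b f \<Longrightarrow> smooth_strip a b (Dy a b f)"
  by (erule smooth_strip.cases) auto

lemma smooth_strip_Dz: "smooth_strip a b f \<Longrightarrow> smooth_strip a b (Dz f)"
  by (erule smooth_strip.cases) auto

lemma continuous_on_Lap: "smooth_strip a b f \<Longrightarrow> continuous_on (strip a b) (Lap a b f)"
  unfolding Lap_def
  by (intro continuous_intros smooth_strip_continuous_on smooth_strip_Dy smooth_strip_Dz)

lemma has_vector_derivative_Dy:
  assumes f: "smooth_strip a b f" and t: "t \<in> {a..b}"
  shows "((\<lambda>s. f (s, z)) has_vector_derivative Dy a b f (t, z)) (at t within {a..b})"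
proof -
  have "(\<lambda>s. (s, z)) ` {a..b} \<subseteq> strip a b" by (auto simp: strip_def)
  moreover have "f differentiable (at (t, z) within strip a b)"
    using smooth_strip_differentiable[OF f] t by (auto simp: strip_def)
  ultimately have "f differentiable (at ((\<lambda>s. (s, z)) t) within (\<lambda>s. (s, z)) ` {a..b})"
    using differentiable_within_subset by fastforce
  from differentiable_chain_within[OF _ this]
  have "(\<lambda>s. f (s, z)) differentiable (at t within {a..b})"
    by (simp add: o_def)
  then show ?thesis
    by (simp add: Dy_def vector_derivative_works)
qed

lemma has_vector_derivative_Dz:
  assumes f: "smooth_strip a b f" and y: "y \<in> {a..b}"
  shows "((\<lambda>s. f (y, s)) has_vector_derivative Dz f (y, t)) (at t)"
proof -
  have "(\<lambda>s. (y, s)) ` UNIV \<subseteq> strip a b" using y by (auto simp: strip_def)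
  moreover have "f differentiable (at (y, t) within strip a b)"
    using smooth_strip_differentiable[OF f] y by (auto simp: strip_def)
  ultimately have "f differentiable (at ((\<lambda>s. (y, s)) t) within (\<lambda>s. (y, s)) ` UNIV)"
    using differentiable_within_subset by fastforce
  from differentiable_chain_within[OF _ this]
  have "(\<lambda>s. f (y, s)) differentiable (at t)"
    by (simp add: o_def)
  then show ?thesis
    by (simp add: Dz_def vector_derivative_works)
qed

lemma periodic_z_Dz:
  assumes f: "smooth_strip a b f" and p: "periodic_z a b l f"
  shows "periodic_z a b l (Dz f)"
  unfolding periodic_z_def
proof (intro ballI allI)
  fix y z assume y: "y \<in> {a..b}"
  have shift: "((\<lambda>s. s + l) has_vector_derivative 1) (at z)"
    by (auto intro!: derivative_eq_intros)
  from vector_diff_chain_at[OF shift, of "\<lambda>s. f (y, s)", simplified, OF has_vector_derivative_Dz[OF f y]]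
  have "((\<lambda>s. f (y, s + l)) has_vector_derivative Dz f (y, z + l)) (at z)"
    by (simp add: o_def)
  moreover have "(\<lambda>s. f (y, s + l)) = (\<lambda>s. f (y, s))"
    using p y by (auto simp: periodic_z_def)
  ultimately have "((\<lambda>s. f (y, s)) has_vector_derivative Dz f (y, z + l)) (at z)"
    by simp
  from vector_derivative_unique_at[OF this has_vector_derivative_Dz[OF f y]]
  show "Dz f (y, z + l) = Dz f (y, z)" .
qed

lemma periodic_z_Dy:
  assumes ab: "a < b" and f: "smooth_strip a b f" and p: "periodic_z a b l f"
  shows "periodic_z a b l (Dy a b f)"
  unfolding periodic_z_def
proof (intro ballI allI)
  fix y z assume y: "y \<in> {a..b}"
  have "((\<lambda>s. f (s, z)) has_vector_derivative Dy a b f (y, z + l)) (at y within {a..b})"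
    using has_vector_derivative_transform[OF y _ has_vector_derivative_Dy[OF f y], of "\<lambda>s. f (s, z)"] p
    by (auto simp: periodic_z_def)
  from vector_derivative_unique_within_closed_interval[unfolded cbox_interval, OF ab y this
      has_vector_derivative_Dy[OF f y]]
  show "Dy a b f (y, z + l) = Dy a b f (y, z)" .
qed

lemma periodic_z_int_shift:
  assumes p: "periodic_z a b l f" and y: "y \<in> {a..b}"
  shows "f (y, z + real_of_int n * l) = f (y, z)"
proof -
  have nat_shift: "f (y, z + real m * l) = f (y, z)" for m z
  proof (induction m arbitrary: z)
    case (Suc m)
    have "f (y, z + real (Suc m) * l) = f (y, (z + real m * l) + l)"
      by (simp add: algebra_simps)
    with Suc p y show ?case by (simp add: periodic_z_def)
  qed simp
  show ?thesis
  proof (cases "n \<ge> 0")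
    case True
    then show ?thesis using nat_shift[of z "nat n"] by simp
  next
    case False
    then show ?thesis using nat_shift[of "z + real_of_int n * l" "nat (- n)"] by simp
  qed
qed

abbreviation cell :: "real \<Rightarrow> real \<Rightarrow> real \<Rightarrow> (real \<times> real) set" where
  "cell a b l \<equiv> cbox (a, 0) (b, l)"

lemma cell_subset_strip: "cell a b l \<subseteq> strip a b"
  by (auto simp: strip_def cbox_Pair_iff[symmetric] cbox_interval)

lemma periodic_z_image_strip_eq_cell:
  assumes p: "periodic_z a b l f" and l: "l > 0"
  shows "f ` strip a b = f ` cell a b l"
proof
  show "f ` strip a b \<subseteq> f ` cell a b l"
  proof
    fix x assume "x \<in> f ` strip a b"
    then obtain y z where y: "y \<in> {a..b}" and x: "x = f (y, z)"
      by (auto simp: strip_def)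
    define n where "n = - \<lfloor>z / l\<rfloor>"
    have "of_int \<lfloor>z / l\<rfloor> * l \<le> z" "z < (of_int \<lfloor>z / l\<rfloor> + 1) * l"
      using l by (simp_all add: floor_divide_lower floor_divide_upper)
    then have "(y, z + real_of_int n * l) \<in> cell a b l"
      using y by (simp add: n_def cbox_Pair_iff[symmetric] algebra_simps)
    moreover have "x = f (y, z + real_of_int n * l)"
      using periodic_z_int_shift[OF p y] x by simp
    ultimately show "x \<in> f ` cell a b l" by blast
  qed
  show "f ` cell a b l \<subseteq> f ` strip a b"
    using cell_subset_strip by blast
qed

lemma bdd_above_abs_periodic_z:
  fixes h :: "real \<times> real \<Rightarrow> real"
  assumes c: "continuous_on (strip a b) h" and p: "periodic_z a b l h" and l: "l > 0"
  shows "bdd_above ((\<lambda>q. \<bar>h q\<bar>) ` strip a b)"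
proof -
  have "compact ((\<lambda>q. \<bar>h q\<bar>) ` cell a b l)"
    using continuous_on_subset[OF c cell_subset_strip]
    by (intro compact_continuous_image continuous_intros) auto
  then have "bdd_above (abs ` h ` cell a b l)"
    by (simp add: image_image bounded_imp_bdd_above compact_imp_bounded)
  then show ?thesis
    by (simp add: periodic_z_image_strip_eq_cell[OF p l, symmetric] image_image)
qed

lemma integrable_on_cell:
  fixes f :: "real \<times> real \<Rightarrow> 'v::banach"
  shows "continuous_on (strip a b) f \<Longrightarrow> f integrable_on cell a b l"
  using integrable_continuous continuous_on_subset cell_subset_strip by blast

lemma integral_cell_iterated_y_z:
  fixes f :: "real \<times> real \<Rightarrow> 'v::banach"
  assumes "continuous_on (strip a b) f"
  shows "integral (cell a b l) f = integral {a..b} (\<lambda>y. integral {0..l} (\<lambda>z. f (y, z)))"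
  using integral_prod_continuous[OF continuous_on_subset[OF assms cell_subset_strip]]
  by (simp add: cbox_interval)

lemma integral_cell_iterated_z_y:
  fixes f :: "real \<times> real \<Rightarrow> 'v::banach"
  assumes "continuous_on (strip a b) f"
  shows "integral (cell a b l) f = integral {0..l} (\<lambda>z. integral {a..b} (\<lambda>y. f (y, z)))"
  using integral_cell_iterated_y_z[OF assms]
    integral_swap_continuous[of a 0 b l "\<lambda>y z. f (y, z)"] continuous_on_subset[OF assms cell_subset_strip]
  by (simp add: cbox_interval)

lemma integral_Dy_product_eq_0:
  fixes f g :: "real \<times> real \<Rightarrow> complex"
  assumes f: "smooth_strip a b f" and g: "smooth_strip a b g" and ab: "a \<le> b"
    and g_a: "\<And>z. g (a, z) = 0" and g_b: "\<And>z. g (b, z) = 0"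
  shows "integral (cell a b l) (\<lambda>q. Dy a b f q * cnj (g q) + f q * cnj (Dy a b g q)) = 0"
proof -
  have slice: "integral {a..b} (\<lambda>y. Dy a b f (y, z) * cnj (g (y, z)) + f (y, z) * cnj (Dy a b g (y, z))) = 0"
    for z
  proof -
    have "((\<lambda>y. Dy a b f (y, z) * cnj (g (y, z)) + f (y, z) * cnj (Dy a b g (y, z))) has_integral
        f (b, z) * cnj (g (b, z)) - f (a, z) * cnj (g (a, z))) {a..b}"
    proof (rule fundamental_theorem_of_calculus[OF ab])
      fix y assume y: "y \<in> {a..b}"
      show "((\<lambda>y. f (y, z) * cnj (g (y, z))) has_vector_derivative
          Dy a b f (y, z) * cnj (g (y, z)) + f (y, z) * cnj (Dy a b g (y, z))) (at y within {a..b})"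
        using has_vector_derivative_mult[OF has_vector_derivative_Dy[OF f y]
            has_vector_derivative_cnj[OF has_vector_derivative_Dy[OF g y]]]
        by (simp add: add.commute)
    qed
    then show ?thesis using g_a g_b by (simp add: integral_unique)
  qed
  have "continuous_on (strip a b) (\<lambda>q. Dy a b f q * cnj (g q) + f q * cnj (Dy a b g q))"
    using f g by (intro continuous_intros smooth_strip_continuous_on smooth_strip_Dy)
  then show ?thesis
    by (simp add: integral_cell_iterated_z_y slice)
qed

lemma integral_Dz_product_eq_0:
  fixes f g :: "real \<times> real \<Rightarrow> complex"
  assumes f: "smooth_strip a b f" and g: "smooth_strip a b g" and l: "0 \<le> l"
    and f_per: "periodic_z a b l f" and g_per: "periodic_z a b l g"
  shows "integral (cell a b l) (\<lambda>q. Dz f q * cnj (g q) + f q * cnj (Dz g q)) = 0"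
proof -
  have slice: "integral {0..l} (\<lambda>z. Dz f (y, z) * cnj (g (y, z)) + f (y, z) * cnj (Dz g (y, z))) = 0"
    if y: "y \<in> {a..b}" for y
  proof -
    have "((\<lambda>z. Dz f (y, z) * cnj (g (y, z)) + f (y, z) * cnj (Dz g (y, z))) has_integral
        f (y, l) * cnj (g (y, l)) - f (y, 0) * cnj (g (y, 0))) {0..l}"
    proof (rule fundamental_theorem_of_calculus[OF l])
      fix z assume "z \<in> {0..l}"
      show "((\<lambda>z. f (y, z) * cnj (g (y, z))) has_vector_derivative
          Dz f (y, z) * cnj (g (y, z)) + f (y, z) * cnj (Dz g (y, z))) (at z within {0..l})"
        using has_vector_derivative_mult[OF has_vector_derivative_Dz[OF f y]
            has_vector_derivative_cnj[OF has_vector_derivative_Dz[OF g y]]]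
        by (simp add: has_vector_derivative_at_within add.commute)
    qed
    moreover have "f (y, l) = f (y, 0)" "g (y, l) = g (y, 0)"
      using f_per g_per y unfolding periodic_z_def by (metis add_0)+
    ultimately show ?thesis by (simp add: integral_unique)
  qed
  have "continuous_on (strip a b) (\<lambda>q. Dz f q * cnj (g q) + f q * cnj (Dz g q))"
    using f g by (intro continuous_intros smooth_strip_continuous_on smooth_strip_Dz)
  then have "integral (cell a b l) (\<lambda>q. Dz f q * cnj (g q) + f q * cnj (Dz g q))
      = integral {a..b} (\<lambda>y. integral {0..l} (\<lambda>z. Dz f (y, z) * cnj (g (y, z)) + f (y, z) * cnj (Dz g (y, z))))"
    by (rule integral_cell_iterated_y_z)
  also have "\<dots> = integral {a..b} (\<lambda>y. 0)"
    by (rule integral_cong) (simp add: slice)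
  finally show ?thesis by simp
qed

lemma Re_integral_cnj_mult_Lap_nonpos:
  fixes f :: "real \<times> real \<Rightarrow> complex"
  assumes f: "smooth_strip a b f" and ab: "a \<le> b" and l: "0 \<le> l"
    and f_per: "periodic_z a b l f" and f_a: "\<And>z. f (a, z) = 0" and f_b: "\<And>z. f (b, z) = 0"
  shows "Re (integral (cell a b l) (\<lambda>q. cnj (f q) * Lap a b f q)) \<le> 0"
proof -
  have f_cont: "continuous_on (strip a b) f" "continuous_on (strip a b) (Dy a b f)"
    "continuous_on (strip a b) (Dz f)" "continuous_on (strip a b) (Dy a b (Dy a b f))"
    "continuous_on (strip a b) (Dz (Dz f))"
    using f by (simp_all add: smooth_strip_continuous_on smooth_strip_Dy smooth_strip_Dz)
  define Py where "Py = (\<lambda>q. Dy a b (Dy a b f) q * cnj (f q) + Dy a b f q * cnj (Dy a b f q))"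
  define Pz where "Pz = (\<lambda>q. Dz (Dz f) q * cnj (f q) + Dz f q * cnj (Dz f q))"
  define G where "G = (\<lambda>q. Dy a b f q * cnj (Dy a b f q) + Dz f q * cnj (Dz f q))"
  \<comment> \<open>Green's identity: the gradient energy G is what remains after the two product rules.\<close>
  have "integral (cell a b l) (\<lambda>q. cnj (f q) * Lap a b f q) = integral (cell a b l) (\<lambda>q. Py q + Pz q - G q)"
    by (rule integral_cong) (simp add: Py_def Pz_def G_def Lap_def algebra_simps)
  also have "\<dots> = integral (cell a b l) Py + integral (cell a b l) Pz - integral (cell a b l) G"
  proof -
    have "Py integrable_on cell a b l" "Pz integrable_on cell a b l" "G integrable_on cell a b l"
      unfolding Py_def Pz_def G_def by (intro integrable_on_cell continuous_intros f_cont)+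
    then show ?thesis by (simp add: integral_diff integral_add integrable_add)
  qed
  also have "\<dots> = - integral (cell a b l) G"
    using integral_Dy_product_eq_0[OF smooth_strip_Dy[OF f] f ab f_a f_b]
      integral_Dz_product_eq_0[OF smooth_strip_Dz[OF f] f l periodic_z_Dz[OF f f_per] f_per]
    by (simp add: Py_def Pz_def)
  finally have "Re (integral (cell a b l) (\<lambda>q. cnj (f q) * Lap a b f q)) = - Re (integral (cell a b l) G)"
    by simp
  moreover have "0 \<le> Re (integral (cell a b l) G)"
  proof -
    have "G integrable_on cell a b l"
      unfolding G_def by (intro integrable_on_cell continuous_intros f_cont)
    from has_integral_Re[OF integrable_integral[OF this]]
    show ?thesis
      by (rule has_integral_nonneg) (simp add: G_def)
  qed
  ultimately show ?thesis by simp
qed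

lemma integral_pressure_work_eq_0:
  fixes u v w p :: "real \<times> real \<Rightarrow> complex" and k :: real
  assumes v: "smooth_strip a b v" and w: "smooth_strip a b w"
    and p: "smooth_strip a b p" and ab: "a \<le> b" and l: "0 \<le> l"
    and w_per: "periodic_z a b l w" and p_per: "periodic_z a b l p"
    and v_a: "\<And>z. v (a, z) = 0" and v_b: "\<And>z. v (b, z) = 0"
    and div: "\<forall>q\<in>strip a b. \<i> * k * u q + Dy a b v q + Dz w q = 0"
  shows "integral (cell a b l)
      (\<lambda>q. cnj (u q) * (- \<i> * k * p q) + cnj (v q) * (- Dy a b p q) + cnj (w q) * (- Dz p q)) = 0"
proof -
  define Py where "Py = (\<lambda>q. Dy a b p q * cnj (v q) + p q * cnj (Dy a b v q))"
  define Pz where "Pz = (\<lambda>q. Dz p q * cnj (w q) + p q * cnj (Dz w q))"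
  have "integral (cell a b l)
      (\<lambda>q. cnj (u q) * (- \<i> * k * p q) + cnj (v q) * (- Dy a b p q) + cnj (w q) * (- Dz p q))
      = integral (cell a b l) (\<lambda>q. - Py q - Pz q)"
    \<comment> \<open>Incompressibility turns the pressure work into a sum of exact derivatives.\<close>
  proof (rule integral_cong)
    fix q assume "q \<in> cell a b l"
    then have "\<i> * k * u q + Dy a b v q + Dz w q = 0"
      using div cell_subset_strip by blast
    then have "p q * cnj (\<i> * k * u q + Dy a b v q + Dz w q) = 0"
      by simp
    then show "cnj (u q) * (- \<i> * k * p q) + cnj (v q) * (- Dy a b p q) + cnj (w q) * (- Dz p q)
        = - Py q - Pz q"
      by (simp add: Py_def Pz_def algebra_simps)
  qed
  also have "\<dots> = - integral (cell a b l) Py - integral (cell a b l) Pz"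
  proof -
    have cont: "continuous_on (strip a b) v" "continuous_on (strip a b) (Dy a b v)"
      "continuous_on (strip a b) w" "continuous_on (strip a b) (Dz w)"
      "continuous_on (strip a b) p" "continuous_on (strip a b) (Dy a b p)"
      "continuous_on (strip a b) (Dz p)"
      using v w p by (simp_all add: smooth_strip_continuous_on smooth_strip_Dy smooth_strip_Dz)
    have "Py integrable_on cell a b l" "Pz integrable_on cell a b l"
      unfolding Py_def Pz_def by (intro integrable_on_cell continuous_intros cont)+
    then show ?thesis by (simp add: integral_diff integral_neg integrable_neg)
  qed
  also have "\<dots> = 0"
    using integral_Dy_product_eq_0[OF p v ab v_a v_b] integral_Dz_product_eq_0[OF p w l p_per w_per]
    by (simp add: Py_def Pz_def)
  finally show ?thesis .
qed

lemma integral_cell_pos_periodic_z: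
  fixes f :: "real \<times> real \<Rightarrow> real"
  assumes ab: "a < b" and l: "l > 0"
    and cont: "continuous_on (strip a b) f" and per: "periodic_z a b l f"
    and nonneg: "\<And>q. q \<in> strip a b \<Longrightarrow> 0 \<le> f q"
    and q0: "q0 \<in> strip a b" "f q0 \<noteq> 0"
  shows "0 < integral (cell a b l) f"
proof -
  have cont_cell: "continuous_on (cell a b l) f"
    using continuous_on_subset[OF cont cell_subset_strip] .
  have nonneg_cell: "\<And>q. q \<in> cell a b l \<Longrightarrow> 0 \<le> f q"
    using nonneg cell_subset_strip by blast
  obtain q1 where "q1 \<in> cell a b l" "f q1 \<noteq> 0"
    using q0 periodic_z_image_strip_eq_cell[OF per l] by (metis image_iff)
  moreover have "box (a, 0) (b, l) \<noteq> {}"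
    using ab l by (simp add: box_ne_empty inner_Pair_0 Basis_prod_def)
  ultimately have "integral (cell a b l) f \<noteq> 0"
    using integral_cbox_eq_0_iff[OF cont_cell _ nonneg_cell] by blast
  moreover have "0 \<le> integral (cell a b l) f"
    using integral_nonneg[OF integrable_continuous[OF cont_cell] nonneg_cell] .
  ultimately show ?thesis by simp
qed

lemma energy_density_le:
  fixes A u v w Pu Pv Pw Lu Lv Lw :: complex and s t g e K :: real
  assumes hu: "A * u + v * of_real s + w * of_real t = Pu + of_real e * (Lu - of_real K * u)"
    and hv: "A * v = Pv + of_real e * (Lv - of_real K * v)"
    and hw: "A * w = Pw + of_real e * (Lw - of_real K * w)"
    and s: "\<bar>s\<bar> \<le> g" and t: "\<bar>t\<bar> \<le> g"
  shows "(Re A - g + e * K) * ((cmod u)\<^sup>2 + (cmod v)\<^sup>2 + (cmod w)\<^sup>2)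
    \<le> Re (cnj u * Pu + cnj v * Pv + cnj w * Pw) + e * Re (cnj u * Lu + cnj v * Lv + cnj w * Lw)"
proof -
  define E where "E = (cmod u)\<^sup>2 + (cmod v)\<^sup>2 + (cmod w)\<^sup>2"
  have Re_cnj_mult: "Re (cnj x * (B * x)) = Re B * (cmod x)\<^sup>2" for x B :: complex
    unfolding cmod_power2 by (simp add: algebra_simps power2_eq_square)
  have Re_cnj_viscous: "Re (cnj x * (of_real e * (L - of_real K * x))) = e * (Re (cnj x * L) - K * (cmod x)\<^sup>2)"
    for x L :: complex
    unfolding cmod_power2 by (simp add: algebra_simps power2_eq_square)
  have "Re (cnj u * (A * u)) + Re (cnj u * (v * of_real s + w * of_real t))
      = Re (cnj u * Pu) + Re (cnj u * (of_real e * (Lu - of_real K * u)))"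
    using arg_cong[OF hu, of "\<lambda>x. Re (cnj u * x)"] by (simp only: distrib_left add.assoc plus_complex.sel)
  moreover have "Re (cnj v * (A * v)) = Re (cnj v * Pv) + Re (cnj v * (of_real e * (Lv - of_real K * v)))"
    using arg_cong[OF hv, of "\<lambda>x. Re (cnj v * x)"] by (simp only: distrib_left plus_complex.sel)
  moreover have "Re (cnj w * (A * w)) = Re (cnj w * Pw) + Re (cnj w * (of_real e * (Lw - of_real K * w)))"
    using arg_cong[OF hw, of "\<lambda>x. Re (cnj w * x)"] by (simp only: distrib_left plus_complex.sel)
  ultimately have identity: "Re A * E + Re (cnj u * (v * of_real s + w * of_real t))
      = Re (cnj u * Pu + cnj v * Pv + cnj w * Pw) + e * (Re (cnj u * Lu + cnj v * Lv + cnj w * Lw) - K * E)"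
    unfolding E_def Re_cnj_mult Re_cnj_viscous plus_complex.sel by (simp only: ring_distribs)
  have "\<bar>Re (cnj u * (v * of_real s + w * of_real t))\<bar> \<le> cmod u * (cmod v * \<bar>s\<bar> + cmod w * \<bar>t\<bar>)"
  proof -
    have "\<bar>Re (cnj u * (v * of_real s + w * of_real t))\<bar> \<le> cmod u * cmod (v * of_real s + w * of_real t)"
      by (metis abs_Re_le_cmod complex_mod_cnj norm_mult)
    also have "\<dots> \<le> cmod u * (cmod v * \<bar>s\<bar> + cmod w * \<bar>t\<bar>)"
      using norm_triangle_ineq[of "v * of_real s" "w * of_real t"]
      by (intro mult_left_mono) (simp_all add: norm_mult)
    finally show ?thesis .
  qed
  also have "\<dots> \<le> g * (cmod u * cmod v + cmod u * cmod w)"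
    using s t by (simp add: algebra_simps add_mono mult_right_mono)
  also have "\<dots> \<le> g * E"
  proof (rule mult_left_mono)
    show "cmod u * cmod v + cmod u * cmod w \<le> E"
      using sum_squares_bound[of "cmod u" "cmod v"] sum_squares_bound[of "cmod u" "cmod w"]
        zero_le_square[of "cmod v"] zero_le_square[of "cmod w"]
      unfolding E_def power2_eq_square by linarith
    show "0 \<le> g" using s by linarith
  qed
  finally show ?thesis
    using identity unfolding E_def by (simp add: algebra_simps)
qed


lemma energy_growth_rate_le:
  fixes a b l R k g :: real and c :: complex
    and U :: "real \<times> real \<Rightarrow> real"
    and u v w p :: "real \<times> real \<Rightarrow> complex"
  assumes ab: "a \<le> b" and l: "0 \<le> l" and R: "R > 0"
    and smooth: "smooth_strip a b u" "smooth_strip a b v" "smooth_strip a b w" "smooth_strip a b p"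
    and per: "periodic_z a b l u" "periodic_z a b l v" "periodic_z a b l w" "periodic_z a b l p"
    and shear: "\<And>q. q \<in> strip a b \<Longrightarrow> \<bar>Dy a b U q\<bar> \<le> g"
      "\<And>q. q \<in> strip a b \<Longrightarrow> \<bar>Dz U q\<bar> \<le> g"
    and eq1: "\<forall>q\<in>strip a b.
       \<i> * k * (of_real (U q) - c) * u q + v q * of_real (Dy a b U q) + w q * of_real (Dz U q)
       = - \<i> * k * p q + of_real (1 / R) * (Lap a b u q - of_real (k^2) * u q)"
    and eq2: "\<forall>q\<in>strip a b.
       \<i> * k * (of_real (U q) - c) * v q
       = - Dy a b p q + of_real (1 / R) * (Lap a b v q - of_real (k^2) * v q)"
    and eq3: "\<forall>q\<in>strip a b.
       \<i> * k * (of_real (U q) - c) * w q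
       = - Dz p q + of_real (1 / R) * (Lap a b w q - of_real (k^2) * w q)"
    and div: "\<forall>q\<in>strip a b. \<i> * k * u q + Dy a b v q + Dz w q = 0"
    and bc: "\<forall>z. u (a, z) = 0 \<and> v (a, z) = 0 \<and> w (a, z) = 0 \<and>
                 u (b, z) = 0 \<and> v (b, z) = 0 \<and> w (b, z) = 0"
  shows "(k * Im c - g + k^2 / R)
      * integral (cell a b l) (\<lambda>q. (cmod (u q))\<^sup>2 + (cmod (v q))\<^sup>2 + (cmod (w q))\<^sup>2) \<le> 0"
proof -
  define E where "E = (\<lambda>q. (cmod (u q))\<^sup>2 + (cmod (v q))\<^sup>2 + (cmod (w q))\<^sup>2)"
  define Pr where "Pr = (\<lambda>q. cnj (u q) * (- \<i> * k * p q) + cnj (v q) * (- Dy a b p q) + cnj (w q) * (- Dz p q))"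
  define Vi where "Vi = (\<lambda>q. cnj (u q) * Lap a b u q + cnj (v q) * Lap a b v q + cnj (w q) * Lap a b w q)"
  have cont: "continuous_on (strip a b) u" "continuous_on (strip a b) v" "continuous_on (strip a b) w"
    "continuous_on (strip a b) p" "continuous_on (strip a b) (Dy a b p)" "continuous_on (strip a b) (Dz p)"
    "continuous_on (strip a b) (Lap a b u)" "continuous_on (strip a b) (Lap a b v)"
    "continuous_on (strip a b) (Lap a b w)"
    using smooth by (simp_all add: smooth_strip_continuous_on smooth_strip_Dy smooth_strip_Dz continuous_on_Lap)
  have E_int: "E integrable_on cell a b l" and Pr_int: "Pr integrable_on cell a b l"
    and Vi_int: "Vi integrable_on cell a b l"
    unfolding E_def Pr_def Vi_def by (intro integrable_on_cell continuous_intros cont)+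
  have pointwise: "(k * Im c - g + k^2 / R) * E q \<le> Re (Pr q) + 1 / R * Re (Vi q)"
    if "q \<in> cell a b l" for q
  proof -
    have q: "q \<in> strip a b" using that cell_subset_strip by blast
    from energy_density_le[OF eq1[rule_format, OF q] eq2[rule_format, OF q] eq3[rule_format, OF q]
        shear[OF q]]
    show ?thesis by (simp add: E_def Pr_def Vi_def)
  qed
  have "(k * Im c - g + k^2 / R) * integral (cell a b l) E
      \<le> Re (integral (cell a b l) Pr) + 1 / R * Re (integral (cell a b l) Vi)"
    by (rule has_integral_le[OF has_integral_mult_right[OF integrable_integral[OF E_int]]
          has_integral_add[OF has_integral_Re[OF integrable_integral[OF Pr_int]]
            has_integral_mult_right[OF has_integral_Re[OF integrable_integral[OF Vi_int]]]] pointwise])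
  moreover have "integral (cell a b l) Pr = 0"
    unfolding Pr_def using bc
    by (intro integral_pressure_work_eq_0 smooth ab l per div) auto
  moreover have Vi_nonpos: "Re (integral (cell a b l) Vi) \<le> 0"
  proof -
    have "(\<lambda>q. cnj (u q) * Lap a b u q) integrable_on cell a b l"
      "(\<lambda>q. cnj (v q) * Lap a b v q) integrable_on cell a b l"
      "(\<lambda>q. cnj (w q) * Lap a b w q) integrable_on cell a b l"
      by (intro integrable_on_cell continuous_intros cont)+
    then have "integral (cell a b l) Vi = integral (cell a b l) (\<lambda>q. cnj (u q) * Lap a b u q)
        + integral (cell a b l) (\<lambda>q. cnj (v q) * Lap a b v q) + integral (cell a b l) (\<lambda>q. cnj (w q) * Lap a b w q)"
      unfolding Vi_def by (simp add: integral_add integrable_add)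
    then show ?thesis
      using bc Re_integral_cnj_mult_Lap_nonpos[OF smooth(1) ab l per(1)]
        Re_integral_cnj_mult_Lap_nonpos[OF smooth(2) ab l per(2)]
        Re_integral_cnj_mult_Lap_nonpos[OF smooth(3) ab l per(3)]
      by simp
  qed
  ultimately have "(k * Im c - g + k^2 / R) * integral (cell a b l) E \<le> Re (integral (cell a b l) Vi) / R"
    by simp
  also have "\<dots> \<le> 0"
    using Vi_nonpos R by (simp add: divide_nonpos_pos)
  finally show ?thesis unfolding E_def .
qed

theorem theorem4:
  fixes a b l3 R k :: real and c :: complex
    and U :: "real \<times> real \<Rightarrow> real"
    and u v w p :: "real \<times> real \<Rightarrow> complex"
  assumes ab: "a < b" and l3: "l3 > 0" and R: "R > 0"
    and U_smooth: "smooth_strip a b U" and U_per: "periodic_z a b l3 U"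
    and k: "k > 0"
    and smooth: "smooth_strip a b u" "smooth_strip a b v" "smooth_strip a b w" "smooth_strip a b p"
    and per: "periodic_z a b l3 u" "periodic_z a b l3 v" "periodic_z a b l3 w" "periodic_z a b l3 p"
    and nontriv: "\<exists>q\<in>strip a b. u q \<noteq> 0 \<or> v q \<noteq> 0 \<or> w q \<noteq> 0"
    and eq1: "\<forall>q\<in>strip a b.
       \<i> * k * (of_real (U q) - c) * u q + v q * of_real (Dy a b U q) + w q * of_real (Dz U q)
       = - \<i> * k * p q + of_real (1 / R) * (Lap a b u q - of_real (k^2) * u q)"
    and eq2: "\<forall>q\<in>strip a b.
       \<i> * k * (of_real (U q) - c) * v q
       = - Dy a b p q + of_real (1 / R) * (Lap a b v q - of_real (k^2) * v q)"
    and eq3: "\<forall>q\<in>strip a b.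
       \<i> * k * (of_real (U q) - c) * w q
       = - Dz p q + of_real (1 / R) * (Lap a b w q - of_real (k^2) * w q)"
    and div: "\<forall>q\<in>strip a b. \<i> * k * u q + Dy a b v q + Dz w q = 0"
    and bc: "\<forall>z. u (a, z) = 0 \<and> v (a, z) = 0 \<and> w (a, z) = 0 \<and>
                 u (b, z) = 0 \<and> v (b, z) = 0 \<and> w (b, z) = 0"
    and small: "R * max (SUP q\<in>strip a b. \<bar>Dy a b U q\<bar>) (SUP q\<in>strip a b. \<bar>Dz U q\<bar>)
                 < min k (k^3)"
  shows "Im c < 0"
proof -
  define g where "g = max (SUP q\<in>strip a b. \<bar>Dy a b U q\<bar>) (SUP q\<in>strip a b. \<bar>Dz U q\<bar>)"
  have "bdd_above ((\<lambda>q. \<bar>Dy a b U q\<bar>) ` strip a b)" "bdd_above ((\<lambda>q. \<bar>Dz U q\<bar>) ` strip a b)"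
    using U_smooth l3 periodic_z_Dy[OF ab U_smooth U_per] periodic_z_Dz[OF U_smooth U_per]
    by (simp_all add: bdd_above_abs_periodic_z smooth_strip_continuous_on smooth_strip_Dy smooth_strip_Dz)
  then have shear: "\<And>q. q \<in> strip a b \<Longrightarrow> \<bar>Dy a b U q\<bar> \<le> g" "\<And>q. q \<in> strip a b \<Longrightarrow> \<bar>Dz U q\<bar> \<le> g"
    unfolding g_def by (meson cSUP_upper max.coboundedI1 max.coboundedI2)+
  have "min k (k^3) \<le> k^2"
    using k power_decreasing[of 2 3 k] power_increasing[of 1 2 k] by (cases "k \<le> 1") auto
  then have "R * g < k^2"
    using small unfolding g_def by linarith
  then have "g < k^2 / R"
    using R by (simp add: pos_less_divide_eq mult.commute)
  moreover obtain q0 where q0: "q0 \<in> strip a b" "u q0 \<noteq> 0 \<or> v q0 \<noteq> 0 \<or> w q0 \<noteq> 0"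
    using nontriv by blast
  then have "0 < integral (cell a b l3) (\<lambda>q. (cmod (u q))\<^sup>2 + (cmod (v q))\<^sup>2 + (cmod (w q))\<^sup>2)"
    using per smooth
    by (intro integral_cell_pos_periodic_z[OF ab l3 _ _ _ q0(1)])
      (auto simp: periodic_z_def add_nonneg_eq_0_iff smooth_strip_continuous_on intro!: continuous_intros)
  ultimately have "k * Im c < 0"
    using energy_growth_rate_le[OF _ _ R smooth per shear eq1 eq2 eq3 div bc] ab l3
    by (smt (verit) mult_le_0_iff)
  then show ?thesis
    using k by (simp add: mult_less_0_iff)
qed

end
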